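(* Let $R$ be the holistic system robustness random variable (defined in the context), with distribution $\pi_R$, so that $\mathbb{P}_{\pi_R}[-R\le a]=1$. Let $\epsilon\in(0,1)$, $\gamma\in[0,1)$, $\alpha\in(0,1]$, and define \[ L(x,\mu,t)=t\left(\mu+\frac{1}{\alpha}\max\left\{\frac{x}{t}-\mu,0\right\}\right),\qquad u_b(\mu,t)=L(a,\mu,t). \] Let $r_1,\dots,r_N$ be independent samples of $R$ with $N\ge\frac{\log(1-\gamma)}{\log(1-\epsilon)}$, and $\zeta^*_N(\mu,t)=\max_{1\le k\le N}L(-r_k,\mu,t)$. Then \[ \mathbb{P}^N_{\pi_R}\left[r^*_C\triangleq\inf_{\mu\in\mathbb{R},\ t>0}\zeta^*_N(\mu,t)(1-\epsilon)+u_b(\mu,t)\epsilon\ \ge\ \mathrm{CVaR}_\alpha(-R)\right]\ge\gamma. \]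
   Context: System setting: $\dot x = f(x,u)+\xi$, $x\in\mathcal{X}\subset\mathbb{R}^n$, $u=U(x,\theta)\in\mathcal{U}\subset\mathbb{R}^m$, $\theta\in\Theta\subset\mathbb{R}^p$ a parameter fixed along a trajectory, and $\xi$ stochastic noise with unknown distribution $\pi_\xi(x,u,t)$. $x^\theta$ denotes the resulting closed-loop state signal in $\mathcal{S}=\{s:\mathbb{R}_{\ge0}\to\mathbb{R}^n\}$ from an initial condition $x_0\in\mathcal{X}_0\subseteq\mathcal{X}$. A robustness metric is a function $\rho:\mathcal{S}\to[-a,b]$ with $a,b>0$ such that $\rho(s)\ge0$ only for signals exhibiting desired properties. The holistic system robustness $R$ is the scalar random variable whose samples are $r=\rho(x^\theta)$, where $(x_0,\theta)$ is sampled uniformly from $\mathcal{X}_0\times\Theta$. $\mathrm{CVaR}_\alpha(Z)=\inf_{z\in\mathbb{R}} z+\frac{\mathbb{E}[\max(Z-z,0)]}{\alpha}$. $\zeta^*_N(\mu,t)$ is the solution of $\min_\zeta\zeta$ s.t. $\zeta\ge L(-r_i,\mu,t)$ for all $i$; $\mathbb{P}^N_{\pi_R}$ is the $N$-fold product measure of the i.i.d. sample. *)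

theory Defs
  imports "HOL-Probability.Probability"
begin

definition CVaR :: "real \<Rightarrow> 'a measure \<Rightarrow> ('a \<Rightarrow> real) \<Rightarrow> real" where
  "CVaR alpha M X = (INF z::real. z + (\<integral>\<omega>. max (X \<omega> - z) 0 \<partial>M) / alpha)"

definition Lfun :: "real \<Rightarrow> real \<Rightarrow> real \<Rightarrow> real \<Rightarrow> real" where
  "Lfun alpha x mu t = t * (mu + (1 / alpha) * max (x / t - mu) 0)"

definition ub :: "real \<Rightarrow> real \<Rightarrow> real \<Rightarrow> real \<Rightarrow> real" where
  "ub alpha a mu t = Lfun alpha a mu t"

definition zeta_star :: "real \<Rightarrow> nat \<Rightarrow> (nat \<Rightarrow> real) \<Rightarrow> real \<Rightarrow> real \<Rightarrow> real" where
  "zeta_star alpha N r mu t = (MAX k\<in>{..<N}. Lfun alpha (- r k) mu t)"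

definition r_star_C :: "real \<Rightarrow> real \<Rightarrow> real \<Rightarrow> nat \<Rightarrow> (nat \<Rightarrow> real) \<Rightarrow> real" where
  "r_star_C alpha a eps N r =
     (INF p \<in> {p::real\<times>real. snd p > 0}.
        zeta_star alpha N r (fst p) (snd p) * (1 - eps) + ub alpha a (fst p) (snd p) * eps)"

end

theory Submission
  imports Defs
begin

(* Let c be an eps-quantile of R: P(R < c) <= eps and P(R > c) <= 1 - eps.  All N samples
   exceed c with probability at most (1 - eps)^N <= 1 - gamma.  Otherwise the largest sampled
   loss m = max_k (-r_k) satisfies P(-R > m) <= eps, and since -R <= a almost surely,
   E[max(-R - z, 0)] <= (1 - eps) max(m - z, 0) + eps max(a - z, 0) for every z.  Taking
   z = t mu in the infimum defining CVaR_alpha(-R) turns the right-hand side into exactly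
   zeta*_N(mu, t) (1 - eps) + u_b(mu, t) eps. *)

lemma Lfun_altdef:
  assumes "0 < t"
  shows "Lfun alpha x mu t = t * mu + max (x - t * mu) 0 / alpha"
proof -
  have "t * max (x / t - mu) 0 = max (x - t * mu) 0"
    using assms by (cases "x / t - mu \<ge> 0") (auto simp: field_simps max_def)
  then show ?thesis unfolding Lfun_def by (simp add: algebra_simps)
qed

lemma mono_Lfun:
  assumes "0 < t" "0 < alpha"
  shows "mono (\<lambda>x. Lfun alpha x mu t)"
  using assms by (intro monoI) (auto simp: Lfun_altdef intro!: divide_right_mono max.mono)

lemma Lfun_ge:
  assumes "0 < t" "0 < alpha" "alpha \<le> 1"
  shows "x \<le> Lfun alpha x mu t"
proof -
  have "max (x - t * mu) 0 \<le> max (x - t * mu) 0 / alpha"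
    using assms by (simp add: le_divide_eq mult_left_le)
  then show ?thesis by (simp add: Lfun_altdef[OF assms(1)])
qed

lemma zeta_star_eq_Lfun_Max:
  assumes "0 < N" "0 < t" "0 < alpha"
  shows "zeta_star alpha N r mu t = Lfun alpha (MAX k\<in>{..<N}. - r k) mu t"
proof -
  have "Lfun alpha (MAX k\<in>{..<N}. - r k) mu t = (MAX x\<in>(\<lambda>k. - r k) ` {..<N}. Lfun alpha x mu t)"
    using assms by (intro mono_Max_commute mono_Lfun) auto
  then show ?thesis unfolding zeta_star_def by (simp add: image_image)
qed

(* r*_C as a function of the largest sampled loss m = max_k (-r_k) *)
definition scenario_cost :: "real \<Rightarrow> real \<Rightarrow> real \<Rightarrow> real \<Rightarrow> real" where
  "scenario_cost alpha a eps m =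
     (INF p \<in> {p::real\<times>real. snd p > 0}.
        Lfun alpha m (fst p) (snd p) * (1 - eps) + ub alpha a (fst p) (snd p) * eps)"

lemma r_star_C_eq_scenario_cost:
  assumes "0 < N" "0 < alpha"
  shows "r_star_C alpha a eps N r = scenario_cost alpha a eps (MAX k\<in>{..<N}. - r k)"
  unfolding r_star_C_def scenario_cost_def
  using assms by (intro INF_cong refl) (simp add: zeta_star_eq_Lfun_Max)

lemma mono_scenario_cost:
  assumes "0 \<le> eps" "eps \<le> 1" "0 < alpha" "alpha \<le> 1"
  shows "mono (scenario_cost alpha a eps)"
proof (rule monoI)
  fix m m' :: real assume "m \<le> m'"
  let ?T = "{p::real\<times>real. snd p > 0}"
  let ?cost = "\<lambda>m p. Lfun alpha m (fst p) (snd p) * (1 - eps) + ub alpha a (fst p) (snd p) * eps"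
  have "(1 - eps) * m + eps * a \<le> ?cost m p" if "p \<in> ?T" for p
  proof -
    have "m \<le> Lfun alpha m (fst p) (snd p)" "a \<le> ub alpha a (fst p) (snd p)"
      using that assms by (auto simp: ub_def intro: Lfun_ge)
    then have "(1 - eps) * m \<le> (1 - eps) * Lfun alpha m (fst p) (snd p)"
      "eps * a \<le> eps * ub alpha a (fst p) (snd p)"
      using assms by (auto intro: mult_left_mono)
    then show ?thesis by (simp add: mult.commute)
  qed
  then have bdd: "bdd_below (?cost m ` ?T)"
    by (intro bdd_belowI2) auto
  have "?cost m p \<le> ?cost m' p" if "p \<in> ?T" for p
    using that assms \<open>m \<le> m'\<close> mono_Lfun[of "snd p" alpha "fst p"]
    by (auto simp: mono_def intro!: mult_right_mono)
  then show "scenario_cost alpha a eps m \<le> scenario_cost alpha a eps m'"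
    unfolding scenario_cost_def
    by (intro cINF_greatest order_trans[OF cINF_lower[OF bdd]]) (auto intro: exI[of _ "1::real"])
qed

lemma (in prob_space) CVaR_le_objective:
  assumes "integrable M X" "0 < alpha" "alpha \<le> 1"
  shows "CVaR alpha M X \<le> z + (\<integral>\<omega>. max (X \<omega> - z) 0 \<partial>M) / alpha"
proof -
  have "expectation X \<le> w + (\<integral>\<omega>. max (X \<omega> - w) 0 \<partial>M) / alpha" for w
  proof -
    let ?I = "\<integral>\<omega>. max (X \<omega> - w) 0 \<partial>M"
    have "expectation X - w = (\<integral>\<omega>. X \<omega> - w \<partial>M)"
      using assms(1) by (simp add: prob_space)
    also have "\<dots> \<le> ?I"
      using assms(1) by (intro integral_mono) auto
    also have "?I \<le> ?I / alpha"
      using assms(2,3) by (simp add: le_divide_eq mult_left_le)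
    finally show ?thesis by simp
  qed
  then show ?thesis
    unfolding CVaR_def by (intro cINF_lower bdd_belowI2) auto
qed

lemma (in prob_space) integral_excess_le:
  assumes X: "X \<in> borel_measurable M" and "AE \<omega> in M. X \<omega> \<le> a"
    and tail: "prob {\<omega> \<in> space M. m < X \<omega>} \<le> eps" and "eps \<le> 1"
  shows "(\<integral>\<omega>. max (X \<omega> - z) 0 \<partial>M) \<le> (1 - eps) * max (m - z) 0 + eps * max (a - z) 0"
proof -
  \<comment> \<open>capping m at a keeps A - B nonnegative; the event a < X is null anyway\<close>
  define m' where "m' = min m a"
  define S where "S = {\<omega> \<in> space M. m' < X \<omega>}"
  define A where "A = max (a - z) 0"
  define B where "B = max (m' - z) 0"
  have S: "S \<in> events" using X unfolding S_def by measurable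
  have "prob S \<le> eps"
  proof (cases "m \<le> a")
    case True
    then show ?thesis using tail by (simp add: S_def m'_def)
  next
    case False
    have "AE \<omega> in M. \<omega> \<notin> S"
      using assms(2) by eventually_elim (use False in \<open>auto simp: S_def m'_def\<close>)
    with S have "prob S = 0" by (simp add: prob_eq_0)
    with tail show ?thesis by (metis measure_nonneg order_trans)
  qed
  have "AE \<omega> in M. max (X \<omega> - z) 0 \<le> B + (A - B) * indicator S \<omega>"
    using assms(2) AE_space
    by eventually_elim (auto simp: A_def B_def S_def m'_def max_def indicator_def)
  moreover have "integrable M (\<lambda>\<omega>. max (X \<omega> - z) 0)"
    using assms(2) X by (intro integrable_const_bound[where B=A]) (auto simp: A_def)
  ultimately have "(\<integral>\<omega>. max (X \<omega> - z) 0 \<partial>M) \<le> (\<integral>\<omega>. B + (A - B) * indicator S \<omega> \<partial>M)"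
    using S by (intro integral_mono_AE) (auto simp: emeasure_eq_measure)
  also have "\<dots> = B + (A - B) * prob S"
    using S by (subst Bochner_Integration.integral_add) (auto simp: prob_space emeasure_eq_measure)
  also have "\<dots> \<le> B + (A - B) * eps"
    using \<open>prob S \<le> eps\<close> by (intro add_left_mono mult_left_mono) (auto simp: A_def B_def m'_def)
  also have "\<dots> \<le> (1 - eps) * max (m - z) 0 + eps * A"
    using \<open>eps \<le> 1\<close> mult_left_mono[of B "max (m - z) 0" "1 - eps"]
    by (auto simp: B_def m'_def algebra_simps)
  finally show ?thesis by (simp add: A_def)
qed

lemma (in prob_space) CVaR_le_scenario_cost:
  assumes X: "integrable M X" and "AE \<omega> in M. X \<omega> \<le> a"
    and "prob {\<omega> \<in> space M. m < X \<omega>} \<le> eps" and "eps \<le> 1"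
    and "0 < alpha" "alpha \<le> 1"
  shows "CVaR alpha M X \<le> scenario_cost alpha a eps m"
  unfolding scenario_cost_def
proof (rule cINF_greatest)
  show "{p::real\<times>real. 0 < snd p} \<noteq> {}" by (auto intro: exI[of _ "1::real"])
next
  fix p :: "real \<times> real" assume "p \<in> {p. 0 < snd p}"
  then have t: "0 < snd p" by simp
  define z where "z = snd p * fst p"
  have "CVaR alpha M X \<le> z + (\<integral>\<omega>. max (X \<omega> - z) 0 \<partial>M) / alpha"
    using X assms(5,6) by (rule CVaR_le_objective)
  also have "\<dots> \<le> z + ((1 - eps) * max (m - z) 0 + eps * max (a - z) 0) / alpha"
    using integral_excess_le[OF borel_measurable_integrable[OF X] assms(2-4)] assms(5)
    by (intro add_left_mono divide_right_mono) auto
  also have "\<dots> = Lfun alpha m (fst p) (snd p) * (1 - eps) + ub alpha a (fst p) (snd p) * eps"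
    using t assms(5) by (simp add: ub_def Lfun_altdef z_def field_simps)
  finally show "CVaR alpha M X \<le> Lfun alpha m (fst p) (snd p) * (1 - eps) + ub alpha a (fst p) (snd p) * eps" .
qed

lemma (in real_distribution) quantile_exists:
  assumes "0 < eps" "eps < 1"
  obtains c where "measure M {..<c} \<le> eps" "measure M {c<..} \<le> 1 - eps"
proof -
  define S where "S = {x. eps \<le> cdf M x}"
  have "eventually (\<lambda>x. eps \<le> cdf M x) at_top"
    using order_tendstoD(1)[OF cdf_lim_at_top_prob assms(2)] by eventually_elim simp
  then obtain x where "x \<in> S"
    unfolding S_def by (metis eventually_at_top_linorder mem_Collect_eq order_refl)
  have "eventually (\<lambda>x. cdf M x < eps) at_bot"
    using order_tendstoD(2)[OF cdf_lim_at_bot assms(1)] .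
  then obtain l where l: "\<And>x. x \<le> l \<Longrightarrow> cdf M x < eps" by (auto simp: eventually_at_bot_linorder)
  have bdd: "bdd_below S"
  proof (rule bdd_belowI)
    fix s assume "s \<in> S"
    then show "l \<le> s" using l[of s] by (force simp: S_def)
  qed
  define c where "c = Inf S"
  have "eventually (\<lambda>y. eps \<le> cdf M y) (at_right c)"
  proof (rule eventually_at_rightI[of c])
    fix y assume "y \<in> {c<..<c+1}"
    then obtain s where "s \<in> S" "s < y"
      using cInf_less_iff[OF _ bdd] \<open>x \<in> S\<close> by (auto simp: c_def)
    then show "eps \<le> cdf M y" using cdf_nondecreasing[of s y] by (auto simp: S_def)
  qed simp
  then have "eps \<le> cdf M c"
    using cdf_is_right_cont[of c] by (intro tendsto_lowerbound) (auto simp: continuous_within)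
  moreover have "measure M {..<c} \<le> eps"
  proof (rule tendsto_upperbound[OF cdf_at_left])
    show "eventually (\<lambda>y. cdf M y \<le> eps) (at_left c)"
    proof (rule eventually_at_leftI[of "c - 1"])
      fix y assume "y \<in> {c - 1<..<c}"
      then have "y \<notin> S" using cInf_lower[OF _ bdd] by (force simp: c_def)
      then show "cdf M y \<le> eps" by (simp add: S_def)
    qed simp
  qed simp
  moreover have "measure M {c<..} = measure M (space M - {..c})"
    by (intro arg_cong[where f="measure M"]) auto
  moreover have "\<dots> = 1 - cdf M c"
    using prob_compl[of "{..c}"] by (simp add: cdf_def)
  ultimately show ?thesis using that by simp
qed

lemma borel_measurable_r_star_C:
  assumes "sets M = sets borel" "0 < N" "0 \<le> eps" "eps \<le> 1" "0 < alpha" "alpha \<le> 1"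
  shows "r_star_C alpha a eps N \<in> borel_measurable (PiM {..<N} (\<lambda>_. M))"
proof -
  have "r_star_C alpha a eps N = (\<lambda>r. scenario_cost alpha a eps (MAX k\<in>{..<N}. - r k))"
    using assms(2,5) by (intro ext r_star_C_eq_scenario_cost)
  moreover have "(\<lambda>r. MAX k\<in>{..<N}. - r k) \<in> borel_measurable (PiM {..<N} (\<lambda>_. M))"
    using assms(1) by measurable
  ultimately show ?thesis
    using borel_measurable_mono[OF mono_scenario_cost[OF assms(3-6)]] by (simp add: measurable_compose)
qed

lemma (in real_distribution) CVaR_le_r_star_C:
  assumes "AE x in M. - a \<le> x \<and> x \<le> b" and "measure M {..<c} \<le> eps" "eps \<le> 1"
    and "0 < alpha" "alpha \<le> 1" and "k < N" "r k \<le> c"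
  shows "CVaR alpha M (\<lambda>x. - x) \<le> r_star_C alpha a eps N r"
proof -
  define worst where "worst = (MAX k\<in>{..<N}. - r k)"
  have "- c \<le> worst"
    unfolding worst_def using assms(6,7) by (intro order_trans[OF _ Max_ge[of _ "- r k"]]) auto
  then have "prob {x \<in> space M. worst < - x} \<le> prob {..<c}"
    by (intro finite_measure_mono) auto
  moreover have "integrable M (\<lambda>x. - x)"
  proof (rule integrable_const_bound)
    show "AE x in M. norm (- x) \<le> max a b"
      using assms(1) by eventually_elim auto
  qed simp
  ultimately have "CVaR alpha M (\<lambda>x. - x) \<le> scenario_cost alpha a eps worst"
    using assms(1-5) by (intro CVaR_le_scenario_cost) (auto elim!: eventually_mono)
  then show ?thesis
    using assms(4,6) by (simp add: r_star_C_eq_scenario_cost worst_def)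
qed

lemma (in prob_space) measure_PiM_PiE_const:
  assumes "finite I" "A \<in> events"
  shows "measure (PiM I (\<lambda>_. M)) (PiE I (\<lambda>_. A)) = prob A ^ card I"
proof -
  interpret product_sigma_finite "\<lambda>_. M"
    by (simp add: product_sigma_finite_def sigma_finite_measure_axioms)
  interpret P: prob_space "PiM I (\<lambda>_. M)"
    by (intro prob_space_PiM prob_space_axioms)
  have "emeasure (PiM I (\<lambda>_. M)) (PiE I (\<lambda>_. A)) = (\<Prod>i\<in>I. emeasure M A)"
    using assms by (intro emeasure_PiM) auto
  also have "\<dots> = ennreal (prob A ^ card I)"
    by (simp add: emeasure_eq_measure prod_ennreal ennreal_power)
  finally show ?thesis
    by (simp add: P.emeasure_eq_measure)
qed

lemma (in real_distribution) measure_PiM_exists_le: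
  assumes "finite I"
  shows "measure (PiM I (\<lambda>_. M)) {r \<in> space (PiM I (\<lambda>_. M)). \<exists>k\<in>I. r k \<le> c}
           = 1 - measure M {c<..} ^ card I"
proof -
  interpret P: prob_space "PiM I (\<lambda>_. M)"
    by (intro prob_space_PiM prob_space_axioms)
  have "{r \<in> space (PiM I (\<lambda>_. M)). \<exists>k\<in>I. r k \<le> c} = space (PiM I (\<lambda>_. M)) - PiE I (\<lambda>_. {c<..})"
    by (auto simp: space_PiM PiE_def Pi_def extensional_def not_less)
  then show ?thesis
    using P.prob_compl measure_PiM_PiE_const[OF assms, of "{c<..}"] assms
    by (simp add: sets_PiM_I_finite)
qed

lemma power_le_of_sample_size:
  fixes eps gamma :: real
  assumes "0 < eps" "eps < 1" "gamma < 1"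
    and "real N \<ge> ln (1 - gamma) / ln (1 - eps)"
  shows "(1 - eps) ^ N \<le> 1 - gamma"
proof -
  have "real N * ln (1 - eps) \<le> ln (1 - gamma)"
    using assms by (simp add: divide_le_eq mult.commute)
  then have "ln ((1 - eps) ^ N) \<le> ln (1 - gamma)"
    using assms by (simp add: ln_realpow)
  then show ?thesis
    using assms by simp
qed

theorem corollary7:
  fixes M :: "real measure" and a b eps gamma alpha :: real and N :: nat
  assumes "prob_space M"
    and "sets M = sets borel"
    and "a > 0" and "b > 0"
    and "AE r in M. - a \<le> r \<and> r \<le> b"
    and "0 < eps" and "eps < 1"
    and "0 \<le> gamma" and "gamma < 1"
    and "0 < alpha" and "alpha \<le> 1"
    and "real N \<ge> ln (1 - gamma) / ln (1 - eps)"
  shows "measure (PiM {..<N} (\<lambda>_. M))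
           {r \<in> space (PiM {..<N} (\<lambda>_. M)).
              r_star_C alpha a eps N r \<ge> CVaR alpha M (\<lambda>x. - x)} \<ge> gamma"
proof -
  interpret real_distribution M
    using assms(1,2) by (simp add: real_distribution_def real_distribution_axioms_def)
  let ?P = "PiM {..<N} (\<lambda>_. M)"
  let ?good = "{r \<in> space ?P. r_star_C alpha a eps N r \<ge> CVaR alpha M (\<lambda>x. - x)}"
  interpret P: prob_space ?P
    by (intro prob_space_PiM prob_space_axioms)
  have sample_size: "(1 - eps) ^ N \<le> 1 - gamma"
    using assms(6,7,9,12) by (rule power_le_of_sample_size)
  show ?thesis
  proof (cases "N = 0")
    case True
    with sample_size show ?thesis by (simp add: order_trans[OF _ measure_nonneg])
  next
    case False
    obtain c where c: "prob {..<c} \<le> eps" "prob {c<..} \<le> 1 - eps"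
      using quantile_exists assms(6,7) by blast
    let ?some_below = "{r \<in> space ?P. \<exists>k\<in>{..<N}. r k \<le> c}"
    have "r_star_C alpha a eps N \<in> borel_measurable ?P"
      using False assms(2,6,7,10,11) by (intro borel_measurable_r_star_C) auto
    then have "?good \<in> sets ?P"
      by measurable
    moreover have "?some_below \<subseteq> ?good"
      using assms(7) by (auto intro: CVaR_le_r_star_C[OF assms(5) c(1) _ assms(10,11)])
    ultimately have "measure ?P ?some_below \<le> measure ?P ?good"
      by (rule P.finite_measure_mono[rotated])
    moreover have "gamma \<le> 1 - prob {c<..} ^ N"
      using sample_size power_mono[OF c(2), of N] by simp
    ultimately show ?thesis
      using measure_PiM_exists_le[of "{..<N}" c] by simp
  qed
qed

end
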